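(* Let $P$ be the uniform distribution on $[0,1]$, let $\beta=\{\frac14,\frac12\}$, and let $V_n$ ($n\geq2$) be the $n$th conditional quantization error of $P$ with respect to $\beta$, with $V_\infty=\lim_{n\to\infty}V_n$. Then the $1$-dimensional conditional quantization coefficient exists as a finite positive number and equals $\frac1{12}$, i.e. $\lim_{n\to\infty}n^2(V_n-V_\infty)=\frac1{12}$.
   Context: For a Borel probability measure $P$ on $\mathbb{R}$ and a finite set $\beta\subset\mathbb{R}$ with $\mathrm{card}(\beta)=r$, for $n\geq r$ the $n$th conditional quantization error is $V_n=\inf\{\int\min_{a\in\alpha\cup\beta}(x-a)^2\,dP(x):\alpha\subset\mathbb{R},\ \mathrm{card}(\alpha)\leq n-r\}$. *)

theory Defs
  imports "HOL-Probability.Probability"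
begin

text \<open>The n-th conditional quantization error of a Borel probability measure P on the reals
  with respect to a finite constraint set beta (meaningful for n >= card beta).\<close>
definition cond_quant_err :: "real measure \<Rightarrow> real set \<Rightarrow> nat \<Rightarrow> real" where
  "cond_quant_err P \<beta> n =
     (INF \<alpha> \<in> {\<alpha> :: real set. finite \<alpha> \<and> card \<alpha> \<le> n - card \<beta>}.
        integral\<^sup>L P (\<lambda>x. Min ((\<lambda>a. (x - a)\<^sup>2) ` (\<alpha> \<union> \<beta>))))"

definition unif01 :: "real measure" where
  "unif01 = uniform_measure lborel {0..1}"

end

(*
  Any k points cut an interval of length L into Voronoi cells; a cell of length l costs at
  least l^3/12, and for fixed total length the sum of cubes is smallest when all k cells are
  equal, so k points cost at least L^3/(12 k^2). Adding the points from left to right turns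
  this into an induction whose step is the inequality (A + B)^3/(m + 1)^2 <= A^3/m^2 + B^3.
  Conversely the grid of mesh 1/N, for N divisible by 4, contains 1/4 and 1/2 and costs
  at most 1/(12 N^2). Hence 1/(12 n^2) <= V n <= 1/(12 (n - 6)^2), so lim V = 0 and
  n^2 V n tends to 1/12.
*)
theory Submission
  imports Defs "HOL-Real_Asymp.Real_Asymp"
begin

definition nearest_sqdist :: "real set \<Rightarrow> real \<Rightarrow> real" where
  "nearest_sqdist S x = Min ((\<lambda>a. (x - a)\<^sup>2) ` S)"

lemma nearest_sqdist_singleton [simp]: "nearest_sqdist {a} x = (x - a)\<^sup>2"
  by (simp add: nearest_sqdist_def)

lemma nearest_sqdist_insert:
  "finite S \<Longrightarrow> S \<noteq> {} \<Longrightarrow> nearest_sqdist (insert a S) x = min ((x - a)\<^sup>2) (nearest_sqdist S x)"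
  by (simp add: nearest_sqdist_def)

lemma nearest_sqdist_le: "finite S \<Longrightarrow> a \<in> S \<Longrightarrow> nearest_sqdist S x \<le> (x - a)\<^sup>2"
  by (simp add: nearest_sqdist_def)

lemma nearest_sqdist_ge_iff:
  "finite S \<Longrightarrow> S \<noteq> {} \<Longrightarrow> y \<le> nearest_sqdist S x \<longleftrightarrow> (\<forall>a\<in>S. y \<le> (x - a)\<^sup>2)"
  by (simp add: nearest_sqdist_def)

lemma nearest_sqdist_insert_left:
  assumes "finite A" "A \<noteq> {}" "Max A < b" "x \<le> (Max A + b) / 2"
  shows "nearest_sqdist (insert b A) x = nearest_sqdist A x"
proof -
  have "(x - Max A)\<^sup>2 \<le> (x - b)\<^sup>2"
    using assms(3,4) by (simp add: abs_le_square_iff[symmetric])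
  moreover have "nearest_sqdist A x \<le> (x - Max A)\<^sup>2"
    using assms by (simp add: nearest_sqdist_le)
  ultimately show ?thesis
    using assms by (simp add: nearest_sqdist_insert)
qed

lemma nearest_sqdist_insert_right:
  assumes "finite A" "A \<noteq> {}" "Max A < b" "(Max A + b) / 2 \<le> x"
  shows "nearest_sqdist (insert b A) x = (x - b)\<^sup>2"
proof -
  have "(x - b)\<^sup>2 \<le> (x - a)\<^sup>2" if "a \<in> A" for a
  proof -
    have "a \<le> Max A"
      using assms(1) that by simp
    then show ?thesis
      using assms(3,4) by (simp add: abs_le_square_iff[symmetric])
  qed
  then have "(x - b)\<^sup>2 \<le> nearest_sqdist A x"
    using assms by (simp add: nearest_sqdist_ge_iff)
  then show ?thesis
    using assms by (simp add: nearest_sqdist_insert)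
qed

lemma continuous_on_nearest_sqdist:
  "finite S \<Longrightarrow> S \<noteq> {} \<Longrightarrow> continuous_on A (nearest_sqdist S)"
proof (induction S rule: finite_ne_induct)
  case (singleton a)
  then show ?case by (simp add: continuous_intros)
next
  case (insert a S)
  then have "nearest_sqdist (insert a S) = (\<lambda>x. min ((x - a)\<^sup>2) (nearest_sqdist S x))"
    by (simp add: nearest_sqdist_insert fun_eq_iff)
  with insert.IH show ?case by (simp add: continuous_intros)
qed

lemma integrable_nearest_sqdist:
  "finite S \<Longrightarrow> S \<noteq> {} \<Longrightarrow> nearest_sqdist S integrable_on {u..v}"
  by (intro integrable_continuous_interval continuous_on_nearest_sqdist)

lemma integral_nearest_sqdist_le:
  assumes "finite S" "a \<in> S" "u \<le> v"
  shows "integral {u..v} (nearest_sqdist S) \<le> integral {u..v} (\<lambda>x. (x - a)\<^sup>2)"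
  using assms
  by (intro integral_le integrable_nearest_sqdist integrable_continuous_interval)
     (auto intro!: continuous_intros nearest_sqdist_le)

lemma integral_unif01:
  fixes f :: "real \<Rightarrow> real"
  assumes "continuous_on UNIV f"
  shows "integral\<^sup>L unif01 f = integral {0..1} f"
proof -
  have f_borel: "f \<in> borel_measurable borel"
    using assms by (rule borel_measurable_continuous_onI)
  have density: "unif01 = density lborel (\<lambda>x. ennreal (indicator {0..1} x))"
    unfolding unif01_def uniform_measure_def
    by (intro arg_cong[where f = "density lborel"]) (simp add: fun_eq_iff indicator_def)
  have "integral\<^sup>L unif01 f = integral\<^sup>L lborel (\<lambda>x. indicator {0..1} x *\<^sub>R f x)"
    unfolding density by (rule integral_density) (use f_borel in auto)
  also have "\<dots> = integral {0..1} f"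
    using set_borel_integral_eq_integral(2)[OF borel_integrable_atLeastAtMost'[of 0 1 f]]
      continuous_on_subset[OF assms]
    unfolding set_lebesgue_integral_def by blast
  finally show ?thesis .
qed

lemma integral_unif01_nearest_sqdist:
  assumes "finite S" "S \<noteq> {}"
  shows "integral\<^sup>L unif01 (\<lambda>x. Min ((\<lambda>a. (x - a)\<^sup>2) ` S)) = integral {0..1} (nearest_sqdist S)"
proof -
  have "(\<lambda>x. Min ((\<lambda>a. (x - a)\<^sup>2) ` S)) = nearest_sqdist S"
    by (simp add: fun_eq_iff nearest_sqdist_def)
  then show ?thesis
    using integral_unif01[OF continuous_on_nearest_sqdist[OF assms]] by simp
qed

lemma integral_power2_diff:
  fixes u v b :: real
  assumes "u \<le> v"
  shows "integral {u..v} (\<lambda>x. (x - b)\<^sup>2) = ((v - b) ^ 3 - (u - b) ^ 3) / 3"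
proof -
  have "((\<lambda>x. (x - b) ^ 3 / 3) has_real_derivative (x - b)\<^sup>2) (at x within {u..v})" for x
    by (auto intro!: derivative_eq_intros simp: power2_eq_square)
  then have "((\<lambda>x. (x - b)\<^sup>2) has_integral ((v - b) ^ 3 / 3 - (u - b) ^ 3 / 3)) {u..v}"
    using assms
    by (intro fundamental_theorem_of_calculus) (auto simp: has_real_derivative_iff_has_vector_derivative)
  then show ?thesis
    by (simp add: integral_unique diff_divide_distrib)
qed

lemma integral_power2_diff_ge:
  fixes u v b :: real
  assumes "u \<le> v"
  shows "(v - u) ^ 3 / 12 \<le> integral {u..v} (\<lambda>x. (x - b)\<^sup>2)"
proof -
  have "4 * ((v - b) ^ 3 - (u - b) ^ 3) - (v - u) ^ 3 = 3 * (v - u) * (v + u - 2 * b)\<^sup>2"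
    by (simp add: algebra_simps power2_eq_square power3_eq_cube)
  also have "\<dots> \<ge> 0"
    using assms by simp
  finally show ?thesis
    using integral_power2_diff[OF assms, of b] by simp
qed

lemma power3_div_Suc_square_le:
  fixes A B m :: real
  assumes "A \<ge> 0" "B \<ge> 0" "m > 0"
  shows "(A + B) ^ 3 / (m + 1)\<^sup>2 \<le> A ^ 3 / m\<^sup>2 + B ^ 3"
proof -
  define a where "a = A / m"
  have A: "A = m * a"
    using assms by (simp add: a_def)
  have "a \<ge> 0"
    using assms by (simp add: a_def)
  have "(m + 1)\<^sup>2 * (m * a ^ 3 + B ^ 3) - (m * a + B) ^ 3
      = m * ((a - B)\<^sup>2 * ((2 * m + 1) * a + (m + 2) * B))"
    by (simp add: algebra_simps power2_eq_square power3_eq_cube)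
  also have "\<dots> \<ge> 0"
    using assms \<open>a \<ge> 0\<close> by simp
  finally have "(m * a + B) ^ 3 / (m + 1)\<^sup>2 \<le> m * a ^ 3 + B ^ 3"
    using assms by (simp add: divide_simps mult.commute)
  moreover have "A ^ 3 / m\<^sup>2 = m * a ^ 3"
    using assms A by (simp add: power2_eq_square power3_eq_cube)
  ultimately show ?thesis
    using A by simp
qed

lemma integral_nearest_sqdist_ge:
  assumes "finite S" "S \<noteq> {}" "u \<le> v"
  shows "(v - u) ^ 3 / (12 * (real (card S))\<^sup>2) \<le> integral {u..v} (nearest_sqdist S)"
  using assms
proof (induction S arbitrary: u v rule: finite_linorder_max_induct)
  case empty
  then show ?case by simp
next
  case (insert b A)
  show ?case
  proof (cases "A = {}")
    case True
    then show ?thesis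
      using integral_power2_diff_ge[OF insert.prems(2)] by simp
  next
    case False
    define m where "m = real (card A)"
    define c where "c = (Max A + b) / 2"
    have "m > 0"
      using False insert.hyps(1) by (simp add: m_def card_gt_0_iff)
    have "Max A < b"
      using False insert.hyps by simp
    have card_insert: "real (card (insert b A)) = m + 1"
      using insert.hyps by (auto simp: m_def)
    have left: "(w - u') ^ 3 / (12 * m\<^sup>2) \<le> integral {u'..w} (nearest_sqdist (insert b A))"
      if "u' \<le> w" "w \<le> c" for u' w
    proof -
      have "integral {u'..w} (nearest_sqdist (insert b A)) = integral {u'..w} (nearest_sqdist A)"
        using that False insert.hyps(1) \<open>Max A < b\<close>
        by (intro integral_cong nearest_sqdist_insert_left) (auto simp: c_def)
      with insert.IH[OF False that(1)] show ?thesis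
        by (simp add: m_def)
    qed
    have right: "(v' - w) ^ 3 / 12 \<le> integral {w..v'} (nearest_sqdist (insert b A))"
      if "w \<le> v'" "c \<le> w" for w v'
    proof -
      have "integral {w..v'} (nearest_sqdist (insert b A)) = integral {w..v'} (\<lambda>x. (x - b)\<^sup>2)"
        using that False insert.hyps(1) \<open>Max A < b\<close>
        by (intro integral_cong nearest_sqdist_insert_right) (auto simp: c_def)
      with integral_power2_diff_ge[OF that(1)] show ?thesis
        by simp
    qed
    have "(v - u) ^ 3 / (12 * (m + 1)\<^sup>2) \<le> integral {u..v} (nearest_sqdist (insert b A))"
    proof -
      consider "v \<le> c" | "c \<le> u" | "u \<le> c" "c \<le> v"
        by linarith
      then show ?thesis
      proof cases
        case 1
        with left[OF insert.prems(2)] power3_div_Suc_square_le[of "v - u" 0 m] \<open>m > 0\<close> insert.prems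
        show ?thesis by simp
      next
        case 2
        with right[OF insert.prems(2)] power3_div_Suc_square_le[of 0 "v - u" m] \<open>m > 0\<close> insert.prems
        show ?thesis by simp
      next
        case 3
        have "integral {u..v} (nearest_sqdist (insert b A))
            = integral {u..c} (nearest_sqdist (insert b A)) + integral {c..v} (nearest_sqdist (insert b A))"
          using Henstock_Kurzweil_Integration.integral_combine[OF 3 integrable_nearest_sqdist]
            insert.hyps(1) by simp
        moreover have "(v - u) ^ 3 / (m + 1)\<^sup>2 \<le> (c - u) ^ 3 / m\<^sup>2 + (v - c) ^ 3"
          using power3_div_Suc_square_le[of "c - u" "v - c" m] 3 \<open>m > 0\<close> by simp
        ultimately show ?thesis
          using left[OF 3(1) order_refl] right[OF 3(2) order_refl] by simp
      qed
    qed
    then show ?thesis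
      by (simp only: card_insert)
  qed
qed

lemma integral_nearest_sqdist_cell_le:
  assumes "finite S" "a \<in> S" "a + h \<in> S" "h \<ge> 0"
  shows "integral {a..a + h} (nearest_sqdist S) \<le> h ^ 3 / 12"
proof -
  have "integral {a..a + h} (nearest_sqdist S)
      = integral {a..a + h / 2} (nearest_sqdist S) + integral {a + h / 2..a + h} (nearest_sqdist S)"
    using Henstock_Kurzweil_Integration.integral_combine[of a "a + h / 2" "a + h" "nearest_sqdist S"]
      integrable_nearest_sqdist[of S] assms by fastforce
  also have "\<dots> \<le> integral {a..a + h / 2} (\<lambda>x. (x - a)\<^sup>2) + integral {a + h / 2..a + h} (\<lambda>x. (x - (a + h))\<^sup>2)"
    using assms by (intro add_mono integral_nearest_sqdist_le) auto
  also have "\<dots> = h ^ 3 / 12"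
    using assms by (simp add: integral_power2_diff power3_eq_cube)
  finally show ?thesis .
qed

lemma integral_nearest_sqdist_grid_le:
  assumes "finite S" "h \<ge> 0" "\<And>j. j \<le> N \<Longrightarrow> a + real j * h \<in> S"
  shows "integral {a..a + real N * h} (nearest_sqdist S) \<le> real N * h ^ 3 / 12"
  using assms(3)
proof (induction N)
  case 0
  then show ?case by simp
next
  case (Suc N)
  define x where "x = a + real N * h"
  have "x \<in> S" "x + h \<in> S"
    using Suc.prems[of N] Suc.prems[of "Suc N"] by (auto simp: x_def algebra_simps)
  have "integral {a..a + real (Suc N) * h} (nearest_sqdist S)
      = integral {a..x} (nearest_sqdist S) + integral {x..x + h} (nearest_sqdist S)"
    using Henstock_Kurzweil_Integration.integral_combine[of a x "x + h" "nearest_sqdist S"]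
      integrable_nearest_sqdist[of S] assms(1,2) \<open>x \<in> S\<close> by (fastforce simp: x_def algebra_simps)
  also have "\<dots> \<le> real N * h ^ 3 / 12 + h ^ 3 / 12"
    using Suc assms \<open>x \<in> S\<close> \<open>x + h \<in> S\<close> unfolding x_def
    by (intro add_mono integral_nearest_sqdist_cell_le) auto
  finally show ?case
    by (simp add: algebra_simps)
qed

lemma cond_quant_err_le:
  assumes "finite \<beta>" "\<beta> \<noteq> {}" "finite \<alpha>" "card \<alpha> \<le> n - card \<beta>"
  shows "cond_quant_err P \<beta> n \<le> integral\<^sup>L P (\<lambda>x. Min ((\<lambda>a. (x - a)\<^sup>2) ` (\<alpha> \<union> \<beta>)))"
  unfolding cond_quant_err_def
proof (rule cINF_lower)
  show "\<alpha> \<in> {\<alpha>. finite \<alpha> \<and> card \<alpha> \<le> n - card \<beta>}"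
    using assms by simp
  have "0 \<le> integral\<^sup>L P (\<lambda>x. Min ((\<lambda>a. (x - a)\<^sup>2) ` (\<alpha>' \<union> \<beta>)))" if "finite \<alpha>'" for \<alpha>'
    using assms that by (intro Bochner_Integration.integral_nonneg) (simp add: Min_ge_iff)
  then show "bdd_below ((\<lambda>\<alpha>. integral\<^sup>L P (\<lambda>x. Min ((\<lambda>a. (x - a)\<^sup>2) ` (\<alpha> \<union> \<beta>))))
      ` {\<alpha>. finite \<alpha> \<and> card \<alpha> \<le> n - card \<beta>})"
    by (intro bdd_belowI[of _ 0]) auto
qed

lemma cond_quant_err_unif01_ge:
  assumes "finite \<beta>" "\<beta> \<noteq> {}" "card \<beta> \<le> n"
  shows "1 / (12 * (real n)\<^sup>2) \<le> cond_quant_err unif01 \<beta> n"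
  unfolding cond_quant_err_def
proof (rule cINF_greatest)
  show "{\<alpha>. finite \<alpha> \<and> card \<alpha> \<le> n - card \<beta>} \<noteq> {}"
    by (auto intro: exI[of _ "{}"])
next
  fix \<alpha> :: "real set"
  assume "\<alpha> \<in> {\<alpha>. finite \<alpha> \<and> card \<alpha> \<le> n - card \<beta>}"
  then have "finite (\<alpha> \<union> \<beta>)" and card_le: "card (\<alpha> \<union> \<beta>) \<le> n"
    using assms card_Un_le[of \<alpha> \<beta>] by auto
  moreover have "\<alpha> \<union> \<beta> \<noteq> {}"
    using assms by simp
  ultimately have "0 < card (\<alpha> \<union> \<beta>)"
    by (simp add: card_gt_0_iff)
  then have "1 / (12 * (real n)\<^sup>2) \<le> (1 - 0) ^ 3 / (12 * (real (card (\<alpha> \<union> \<beta>)))\<^sup>2)"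
    using card_le by (simp add: frac_le power_mono)
  also have "\<dots> \<le> integral {0..1} (nearest_sqdist (\<alpha> \<union> \<beta>))"
    using \<open>finite (\<alpha> \<union> \<beta>)\<close> \<open>\<alpha> \<union> \<beta> \<noteq> {}\<close> by (intro integral_nearest_sqdist_ge) auto
  also have "\<dots> = integral\<^sup>L unif01 (\<lambda>x. Min ((\<lambda>a. (x - a)\<^sup>2) ` (\<alpha> \<union> \<beta>)))"
    using \<open>finite (\<alpha> \<union> \<beta>)\<close> \<open>\<alpha> \<union> \<beta> \<noteq> {}\<close> by (simp add: integral_unif01_nearest_sqdist)
  finally show "1 / (12 * (real n)\<^sup>2) \<le> integral\<^sup>L unif01 (\<lambda>x. Min ((\<lambda>a. (x - a)\<^sup>2) ` (\<alpha> \<union> \<beta>)))" .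
qed

lemma cond_quant_err_unif01_grid_le:
  assumes "N > 0" "\<beta> \<noteq> {}" "\<beta> \<subseteq> (\<lambda>j. real j / real N) ` {..N}" "N + 1 + card \<beta> \<le> n"
  shows "cond_quant_err unif01 \<beta> n \<le> 1 / (12 * (real N)\<^sup>2)"
proof -
  define \<alpha> where "\<alpha> = (\<lambda>j. real j / real N) ` {..N}"
  have "finite \<alpha>" "\<alpha> \<union> \<beta> = \<alpha>" "\<alpha> \<noteq> {}"
    using assms(3) by (auto simp: \<alpha>_def)
  have "card \<alpha> = N + 1"
    unfolding \<alpha>_def using assms(1) by (subst card_image) (auto simp: inj_on_def)
  then have "cond_quant_err unif01 \<beta> n \<le> integral\<^sup>L unif01 (\<lambda>x. Min ((\<lambda>a. (x - a)\<^sup>2) ` (\<alpha> \<union> \<beta>)))"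
    using assms \<open>finite \<alpha>\<close> finite_subset[OF assms(3)] by (intro cond_quant_err_le) auto
  also have "\<dots> = integral {0..0 + real N * (1 / real N)} (nearest_sqdist \<alpha>)"
    using \<open>finite \<alpha>\<close> \<open>\<alpha> \<union> \<beta> = \<alpha>\<close> \<open>\<alpha> \<noteq> {}\<close> assms(1)
    by (simp add: integral_unif01_nearest_sqdist)
  also have "\<dots> \<le> real N * (1 / real N) ^ 3 / 12"
    using \<open>finite \<alpha>\<close> by (intro integral_nearest_sqdist_grid_le) (auto simp: \<alpha>_def)
  also have "\<dots> = 1 / (12 * (real N)\<^sup>2)"
    using assms(1) by (simp add: power2_eq_square power3_eq_cube)
  finally show ?thesis .
qed

lemma cond_quant_err_unif01_quarter_half_le:
  assumes "n \<ge> 7"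
  shows "cond_quant_err unif01 {1/4, 1/2} n \<le> 1 / (12 * (real n - 6)\<^sup>2)"
proof -
  define M where "M = (n - 3) div 4"
  have "M > 0" "4 * M + 3 \<le> n" "real n - 6 \<le> real (4 * M)"
    using assms by (auto simp: M_def)
  have "1/4 \<in> (\<lambda>j. real j / real (4 * M)) ` {..4 * M}"
    by (rule rev_image_eqI[of M]) (use \<open>M > 0\<close> in auto)
  moreover have "1/2 \<in> (\<lambda>j. real j / real (4 * M)) ` {..4 * M}"
    by (rule rev_image_eqI[of "2 * M"]) (use \<open>M > 0\<close> in auto)
  ultimately have "{1/4, 1/2} \<subseteq> (\<lambda>j. real j / real (4 * M)) ` {..4 * M}"
    by simp
  then have "cond_quant_err unif01 {1/4, 1/2} n \<le> 1 / (12 * (real (4 * M))\<^sup>2)"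
    using \<open>M > 0\<close> \<open>4 * M + 3 \<le> n\<close> by (intro cond_quant_err_unif01_grid_le) auto
  also have "\<dots> \<le> 1 / (12 * (real n - 6)\<^sup>2)"
    using assms \<open>real n - 6 \<le> real (4 * M)\<close> by (intro divide_left_mono mult_left_mono power_mono) auto
  finally show ?thesis .
qed

theorem theorem3p12:
  defines "V \<equiv> cond_quant_err unif01 {1/4, 1/2}"
  shows "convergent V \<and>
         (\<lambda>n. (real n)\<^sup>2 * (V n - lim V)) \<longlonglongrightarrow> 1/12"
proof -
  have lower: "\<forall>\<^sub>F n in sequentially. 1 / (12 * (real n)\<^sup>2) \<le> V n"
    using eventually_ge_at_top[of 2]
    by eventually_elim (simp add: V_def cond_quant_err_unif01_ge)
  have upper: "\<forall>\<^sub>F n in sequentially. V n \<le> 1 / (12 * (real n - 6)\<^sup>2)"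
    using eventually_ge_at_top[of 7]
    by eventually_elim (simp add: V_def cond_quant_err_unif01_quarter_half_le)
  have "V \<longlonglongrightarrow> 0"
    by (rule tendsto_sandwich[OF lower upper]) real_asymp+
  then have "convergent V" "lim V = 0"
    by (auto simp: convergent_def limI)
  have "(\<lambda>n. (real n)\<^sup>2 * V n) \<longlonglongrightarrow> 1/12"
  proof (rule tendsto_sandwich)
    show "\<forall>\<^sub>F n in sequentially. (real n)\<^sup>2 * (1 / (12 * (real n)\<^sup>2)) \<le> (real n)\<^sup>2 * V n"
      using lower by eventually_elim (rule mult_left_mono; simp)
    show "\<forall>\<^sub>F n in sequentially. (real n)\<^sup>2 * V n \<le> (real n)\<^sup>2 * (1 / (12 * (real n - 6)\<^sup>2))"
      using upper by eventually_elim (rule mult_left_mono; simp)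
  qed real_asymp+
  with \<open>convergent V\<close> \<open>lim V = 0\<close> show ?thesis
    by simp
qed

end
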